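(* Let $k\ge2$. If $\lambda_1,\dots,\lambda_n\in\Lambda_k$ are distinct, then $1,\lambda_1^{-1},\dots,\lambda_n^{-1}$ are linearly independent over $\mathbb{Q}$.
   Context: For an integer $k\ge2$, \[ \Lambda_k:=\Big\{(b_1^{k+1}b_2^{k+2}\cdots b_{k-1}^{2k-1})^{1/k}\ \Big|\ b_1,\dots,b_{k-1}\in\mathbb{Z}_{\ge1},\ b_1\cdots b_{k-1}\ge2,\ b_1\cdots b_{k-1}\text{ squarefree}\Big\}. \] *)

theory Defs
  imports Complex_Main "HOL-Computational_Algebra.Squarefree"
begin

definition Lambda :: "nat \<Rightarrow> real set" where
  "Lambda k = { root k (\<Prod>i\<in>{1..k-1}. real (b i) ^ (k + i)) | b :: nat \<Rightarrow> nat.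
      (\<forall>i\<in>{1..k-1}. b i \<ge> 1) \<and> (\<Prod>i\<in>{1..k-1}. b i) \<ge> 2 \<and> squarefree (\<Prod>i\<in>{1..k-1}. b i) }"

end

theory Submission
  imports Defs Jordan_Normal_Form.Char_Poly
begin

(* Put x_0 = 1 and x_i = 1/lambda_i.  Every x_i is a positive real with x_i^k rational, and a
   prime-exponent count shows that no quotient x_i/x_j (i ~= j) is rational: the k-th power of
   lambda_i is an integer all of whose prime exponents are 0 or lie strictly between k and 2k.
   The monomials in the x_i span a finite-dimensional Q-algebra A of reals.  Let tau be the trace
   of the multiplication maps of A.  If z in A is positive and irrational with z^t = c rational
   for a least t >= 2, then X^t - c has no rational factor of smaller degree (all of its complex
   roots have modulus z), so the characteristic polynomial of multiplication by z is a polynomial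
   in X^t and tau(z) = 0.  Hence tau(x_i/x_j) = 0 for i ~= j, while tau(1) = dim A.  Dividing a
   relation sum_i q_i x_i = 0 by x_j and applying tau gives q_j = 0. *)

section \<open>Rational polynomials and the binomial X^t - c\<close>

interpretation of_rat_poly: map_poly_inj_idom_hom "of_rat :: rat \<Rightarrow> complex" ..

lemma rat_poly_dvd_if_least_degree_root:
  fixes h f :: "rat poly" and l :: complex
  assumes "h \<noteq> 0"
    and h_root: "poly (map_poly of_rat h) l = 0" and f_root: "poly (map_poly of_rat f) l = 0"
    and least: "\<And>g. g \<noteq> 0 \<Longrightarrow> poly (map_poly of_rat g) l = 0 \<Longrightarrow> degree h \<le> degree g"
  shows "h dvd f"
proof (rule ccontr)
  assume not_dvd: "\<not> h dvd f"
  then have "f mod h \<noteq> 0" by (simp add: dvd_eq_mod_eq_0)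
  moreover have "poly (map_poly of_rat (f mod h)) l = 0"
    using h_root f_root
    by (simp flip: minus_div_mult_eq_mod add: of_rat_poly.hom_minus of_rat_poly.hom_mult)
  ultimately have "degree h \<le> degree (f mod h)" by (rule least)
  with degree_mod_less_degree[OF \<open>h \<noteq> 0\<close> not_dvd] show False by simp
qed

lemma norm_coeff_0_if_roots_on_circle:
  fixes p :: "complex poly"
  assumes roots: "\<And>x. poly p x = 0 \<Longrightarrow> norm x = r"
  shows "norm (coeff p 0) = norm (lead_coeff p) * r ^ degree p"
proof (cases "p = 0")
  case False
  obtain root where p: "Polynomial.smult (lead_coeff p) (\<Prod>i<degree p. [:- root i, 1:]) = p"
    using complex_poly_decompose' by blast
  have "norm (root i) = r" if "i < degree p" for i
  proof (rule roots)
    have "poly (\<Prod>i<degree p. [:- root i, 1:]) (root i) = 0"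
      using that by (auto simp: poly_prod)
    then show "poly p (root i) = 0" by (subst p [symmetric]) simp
  qed
  then have "norm (\<Prod>i<degree p. - root i) = r ^ degree p"
    by (simp flip: prod_norm)
  moreover have "coeff p 0 = lead_coeff p * (\<Prod>i<degree p. - root i)"
    by (subst p [symmetric]) (simp add: poly_0_coeff_0 [symmetric] poly_prod)
  ultimately show ?thesis by (simp add: norm_mult)
qed simp

lemma norm_of_rat: "norm (of_rat c :: 'a::real_normed_field) = \<bar>of_rat c\<bar>"
  by (cases c) (simp add: of_rat_rat norm_divide)

lemma poly_binomial: "poly (map_poly of_rat (monom 1 t - [:c:])) (x :: complex) = x ^ t - of_rat c"
  by (simp add: of_rat_poly.hom_minus of_rat_hom.map_poly_pCons_hom poly_monom)

lemma degree_binomial: "t > 0 \<Longrightarrow> degree (monom (1::'a::field) t - [:c:]) = t"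
  by (simp add: diff_conv_add_uminus degree_add_eq_left degree_monom_eq)

lemma coeff_binomial_neq_0D: "coeff (monom (1::'a::field) t - [:c:]) i \<noteq> 0 \<Longrightarrow> i = 0 \<or> i = t"
  by (auto simp: coeff_monom coeff_pCons split: nat.splits if_splits)

lemma power_degree_in_Rats_if_roots_on_circle:
  fixes h :: "rat poly" and z :: real
  assumes "h \<noteq> 0" and "\<And>x::complex. poly (map_poly of_rat h) x = 0 \<Longrightarrow> norm x = z"
  shows "z ^ degree h \<in> \<rat>"
proof -
  have "of_rat \<bar>coeff h 0\<bar> = of_rat \<bar>lead_coeff h\<bar> * z ^ degree h"
    using norm_coeff_0_if_roots_on_circle[of "map_poly of_rat h" z] assms(2) by (simp add: norm_of_rat)
  then have "z ^ degree h = of_rat (\<bar>coeff h 0\<bar> / \<bar>lead_coeff h\<bar>)"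
    using assms(1) by (simp add: of_rat_divide field_simps)
  then show ?thesis by simp
qed

lemma least_degree_binomial_root:
  fixes z :: real and c :: rat and l :: complex and g :: "rat poly"
  assumes "z > 0" and zt: "z ^ t = of_rat c" and lt: "l ^ t = of_rat c"
    and minimal: "\<And>s. 0 < s \<Longrightarrow> s < t \<Longrightarrow> z ^ s \<notin> \<rat>"
    and "g \<noteq> 0" and "poly (map_poly of_rat g) l = 0"
  shows "t \<le> degree g"
proof (cases "t = 0")
  case False
  let ?root = "\<lambda>h::rat poly. h \<noteq> 0 \<and> poly (map_poly of_rat h) l = 0"
  obtain h where h: "?root h" and h_least: "\<And>g. ?root g \<Longrightarrow> degree h \<le> degree g"
    using ex_has_least_nat[of ?root g degree] assms(5,6) by blast
  have "h dvd monom 1 t - [:c:]"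
    using h h_least by (intro rat_poly_dvd_if_least_degree_root) (auto simp: poly_binomial lt)
  then obtain k where hk: "monom 1 t - [:c:] = h * k" by (rule dvdE)
  have "norm x = z" if "poly (map_poly of_rat h) x = 0" for x :: complex
  proof -
    have "poly (map_poly of_rat (monom 1 t - [:c:])) x = 0"
      using that by (simp add: hk of_rat_poly.hom_mult)
    then have "x ^ t = of_rat c" by (simp add: poly_binomial)
    then have "norm x ^ t = norm (of_rat c :: complex)"
      by (metis norm_power)
    also have "\<dots> = z ^ t"
      using \<open>z > 0\<close> by (simp add: norm_of_rat flip: zt)
    finally have "norm x ^ t = z ^ t" .
    then show ?thesis
      using \<open>z > 0\<close> False by (metis norm_ge_zero less_imp_le power_eq_imp_eq_base neq0_conv)
  qed
  then have "z ^ degree h \<in> \<rat>"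
    using h by (intro power_degree_in_Rats_if_roots_on_circle) auto
  moreover have "degree h \<noteq> 0"
  proof
    assume "degree h = 0"
    then obtain a where "h = [:a:]" by (rule degree_eq_zeroE)
    then show False using h by (simp add: of_rat_hom.map_poly_pCons_hom)
  qed
  ultimately have "t \<le> degree h"
    using minimal by (meson not_less neq0_conv)
  also have "\<dots> \<le> degree g"
    using h_least assms(5,6) by blast
  finally show ?thesis .
qed simp

lemma dvd_index_of_coeff_mult:
  fixes p q :: "'a::comm_semiring_0 poly"
  assumes "\<And>i. coeff p i \<noteq> 0 \<Longrightarrow> t dvd i" and "\<And>i. coeff q i \<noteq> 0 \<Longrightarrow> t dvd i"
    and "coeff (p * q) j \<noteq> 0"
  shows "t dvd j"
proof -
  obtain i where "i \<le> j" "coeff p i * coeff q (j - i) \<noteq> 0"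
    using assms(3) unfolding coeff_mult by (meson atMost_iff sum.not_neutral_contains_not_neutral)
  with assms(1,2) have "t dvd j - i" "t dvd i" by (auto dest: mult_not_zero)
  then show ?thesis using \<open>i \<le> j\<close> by (rule dvd_diffD)
qed

lemma binomial_dvd_if_common_root:
  fixes p :: "rat poly" and l :: complex
  assumes "t > 0" and least: "\<And>g. g \<noteq> 0 \<Longrightarrow> poly (map_poly of_rat g) l = 0 \<Longrightarrow> t \<le> degree g"
    and "l ^ t = of_rat c" and "poly (map_poly of_rat p) l = 0"
  shows "monom 1 t - [:c:] dvd p"
proof (rule rat_poly_dvd_if_least_degree_root)
  show "monom 1 t - [:c:] \<noteq> 0"
    using degree_binomial[OF \<open>t > 0\<close>, of c] \<open>t > 0\<close> by auto
  show "poly (map_poly of_rat (monom 1 t - [:c:])) l = 0"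
    using assms(3) by (simp add: poly_binomial)
  show "degree (monom 1 t - [:c:]) \<le> degree g" if "g \<noteq> 0" "poly (map_poly of_rat g) l = 0" for g
    using least[OF that] degree_binomial[OF \<open>t > 0\<close>, of c] by simp
qed (rule assms(4))

lemma dvd_index_of_coeff_if_roots_binomial:
  fixes p :: "rat poly" and c :: rat
  assumes "t > 0"
    and least: "\<And>g l. g \<noteq> 0 \<Longrightarrow> (l::complex) ^ t = of_rat c \<Longrightarrow> poly (map_poly of_rat g) l = 0 \<Longrightarrow> t \<le> degree g"
    and "p \<noteq> 0" and "\<And>l::complex. poly (map_poly of_rat p) l = 0 \<Longrightarrow> l ^ t = of_rat c"
    and "coeff p j \<noteq> 0"
  shows "t dvd j"
  using assms(3-)
proof (induction "degree p" arbitrary: p j rule: less_induct)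
  case (less p)
  show ?case
  proof (cases "degree p = 0")
    case True
    then show ?thesis using less.prems(3) le_degree by fastforce
  next
    case False
    let ?f = "monom 1 t - [:c:] :: rat poly"
    have deg_f: "degree ?f = t" and "?f \<noteq> 0"
      using \<open>t > 0\<close> degree_binomial[of t c] by auto
    obtain l :: complex where l: "poly (map_poly of_rat p) l = 0"
      using False alg_closed_imp_poly_has_root[of "map_poly of_rat p"] by auto
    have "?f dvd p"
      using binomial_dvd_if_common_root[OF \<open>t > 0\<close> least[OF _ less.prems(2)[OF l]] less.prems(2)[OF l] l] .
    then obtain q where pq: "p = ?f * q" by (rule dvdE)
    have "q \<noteq> 0" using less.prems(1) pq by auto
    have q_dvd: "t dvd i" if "coeff q i \<noteq> 0" for i
    proof (rule less.hyps[OF _ \<open>q \<noteq> 0\<close> _ that])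
      show "degree q < degree p"
        using pq \<open>q \<noteq> 0\<close> \<open>?f \<noteq> 0\<close> \<open>t > 0\<close> deg_f by (simp add: degree_mult_eq)
      show "l' ^ t = of_rat c" if "poly (map_poly of_rat q) l' = 0" for l' :: complex
        using less.prems(2)[of l'] that by (simp add: pq of_rat_poly.hom_mult)
    qed
    have f_dvd: "t dvd i" if "coeff ?f i \<noteq> 0" for i
      using coeff_binomial_neq_0D[OF that] by auto
    show ?thesis
      using f_dvd q_dvd less.prems(3) unfolding pq by (rule dvd_index_of_coeff_mult[where q = q])
  qed
qed

section \<open>Characteristic polynomial and trace\<close>

definition trace :: "'a::comm_ring_1 mat \<Rightarrow> 'a" where
  "trace A = (\<Sum>i<dim_row A. A $$ (i, i))"

lemma coeffs_prod_linear_factors: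
  fixes a :: "nat \<Rightarrow> 'a::comm_ring_1"
  shows "degree (\<Prod>i<n. [:- a i, 1:]) \<le> n \<and> coeff (\<Prod>i<n. [:- a i, 1:]) n = 1 \<and>
    (n > 0 \<longrightarrow> coeff (\<Prod>i<n. [:- a i, 1:]) (n - 1) = - (\<Sum>i<n. a i))"
proof (induction n)
  case (Suc n)
  define P where "P = (\<Prod>i<n. [:- a i, 1:])"
  have P: "degree P \<le> n" "coeff P n = 1" "n > 0 \<Longrightarrow> coeff P (n - 1) = - (\<Sum>i<n. a i)"
    using Suc.IH by (simp_all add: P_def)
  have eq: "(\<Prod>i<Suc n. [:- a i, 1:]) = Polynomial.smult (- a n) P + pCons 0 P"
    by (simp add: P_def mult.commute)
  have "degree (Polynomial.smult (- a n) P + pCons 0 P) \<le> Suc n"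
    using P(1) by (intro degree_add_le) (auto intro: order.trans[OF degree_smult_le] order.trans[OF degree_pCons_le])
  moreover have "coeff P (Suc n) = 0"
    using P(1) by (intro coeff_eq_0) simp
  ultimately show ?case
    unfolding eq using P by (cases n) simp_all
qed simp

lemma permutes_moves_two:
  assumes p: "p permutes {..<n}" and "p \<noteq> id"
  obtains i j where "i < n" "j < n" "i \<noteq> j" "p i \<noteq> i" "p j \<noteq> j"
proof -
  obtain i where i: "p i \<noteq> i" using \<open>p \<noteq> id\<close> by (auto simp: fun_eq_iff)
  then have "i < n" using p by (meson lessThan_iff permutes_not_in)
  moreover have "p (p i) \<noteq> p i"
    using i permutes_inj[OF p] by (metis injD)
  moreover have "p i < n" using \<open>i < n\<close> p by (metis lessThan_iff permutes_in_image)
  ultimately show ?thesis using i that by blast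
qed

lemma coeff_char_poly_trace:
  fixes A :: "'a::comm_ring_1 mat"
  assumes A: "A \<in> carrier_mat n n" and "n > 0"
  shows "coeff (char_poly A) (n - 1) = - trace A"
proof -
  define M where "M = char_poly_matrix A"
  have M: "M \<in> carrier_mat n n" using A by (simp add: M_def)
  have M_entry: "M $$ (i, j) = (if i = j then [:- A $$ (i, i), 1:] else [:- A $$ (i, j):])"
    if "i < n" "j < n" for i j
    using A that by (auto simp: M_def char_poly_matrix_def)
  let ?term = "\<lambda>p. signof p * (\<Prod>i<n. M $$ (i, p i))"
  have vanish: "coeff (?term p) (n - 1) = 0" if p: "p permutes {..<n}" "p \<noteq> id" for p
  proof -
    obtain i j where ij: "i < n" "j < n" "i \<noteq> j" "p i \<noteq> i" "p j \<noteq> j"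
      using permutes_moves_two[OF p] .
    have "degree (M $$ (x, p x)) \<le> (if x \<in> {..<n} - {i, j} then 1 else 0)" if "x < n" for x
    proof -
      have "p x < n" using that p(1) by (metis lessThan_iff permutes_in_image)
      then show ?thesis using that M_entry[of x "p x"] ij by auto
    qed
    then have "degree (\<Prod>x<n. M $$ (x, p x)) \<le> (\<Sum>x<n. if x \<in> {..<n} - {i, j} then 1 else 0)"
      by (intro order.trans[OF degree_prod_sum_le] sum_mono) auto
    also have "\<dots> = card ({..<n} - {i, j})"
      by (simp add: sum.If_cases) (rule arg_cong[where f = card], auto)
    also have "\<dots> = n - 2"
      using ij by (simp add: card_Diff_subset)
    finally have "degree (?term p) < n - 1"
      using ij by (auto intro: le_less_trans[OF degree_mult_le])
    then show ?thesis by (rule coeff_eq_0)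
  qed
  have "coeff (char_poly A) (n - 1) = (\<Sum>p | p permutes {..<n}. coeff (?term p) (n - 1))"
    unfolding char_poly_def M_def[symmetric] det_def'[OF M] by (simp add: coeff_sum atLeast0LessThan)
  also have "\<dots> = coeff (?term id) (n - 1)"
    using vanish by (subst sum.remove[of _ id]) (auto simp: finite_permutations permutes_id intro!: sum.neutral)
  also have "\<dots> = coeff (\<Prod>i<n. [:- A $$ (i, i), 1:]) (n - 1)"
    using M_entry by (simp add: signof_id)
  also have "\<dots> = - trace A"
    using coeffs_prod_linear_factors[of "\<lambda>i. A $$ (i, i)" n] \<open>n > 0\<close> A by (simp add: trace_def)
  finally show ?thesis .
qed

lemma smult_one_mult_mat_vec: "v \<in> carrier_vec n \<Longrightarrow> (a \<cdot>\<^sub>m 1\<^sub>m n) *\<^sub>v v = a \<cdot>\<^sub>v (v :: 'a::comm_ring_1 vec)"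
  by (intro eq_vecI) (auto simp: row_smult row_one scalar_prod_left_unit)

lemma char_poly_root_power_if_power_eq_scalar:
  fixes A :: "rat mat" and l :: complex
  assumes A: "A \<in> carrier_mat n n" and At: "A ^\<^sub>m t = c \<cdot>\<^sub>m 1\<^sub>m n"
    and "poly (map_poly of_rat (char_poly A)) l = 0"
  shows "l ^ t = of_rat c"
proof -
  define A' where "A' = map_mat (of_rat :: rat \<Rightarrow> complex) A"
  have A': "A' \<in> carrier_mat n n" using A by (simp add: A'_def)
  have "eigenvalue A' l"
    using assms(3) A' by (simp add: eigenvalue_root_char_poly A'_def of_rat_hom.char_poly_hom[OF A])
  then obtain v where v: "eigenvector A' v l" unfolding eigenvalue_def by blast
  then have "v \<in> carrier_vec n" "v \<noteq> 0\<^sub>v n"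
    using A' by (auto simp: eigenvector_def)
  have "A' ^\<^sub>m t = of_rat c \<cdot>\<^sub>m 1\<^sub>m n"
    unfolding A'_def of_rat_hom.mat_hom_pow[OF A, symmetric] At by (auto simp: of_rat_mult)
  then have eq: "of_rat c \<cdot>\<^sub>v v = l ^ t \<cdot>\<^sub>v v"
    using eigenvector_pow[OF A' v, of t] smult_one_mult_mat_vec[OF \<open>v \<in> carrier_vec n\<close>, of "of_rat c"] by simp
  obtain i where "i < n" "v $ i \<noteq> 0"
  proof (rule ccontr)
    assume "\<not> thesis"
    then have "v = 0\<^sub>v n" using that \<open>v \<in> carrier_vec n\<close> by (intro eq_vecI) auto
    with \<open>v \<noteq> 0\<^sub>v n\<close> show False ..
  qed
  moreover have "of_rat c * v $ i = l ^ t * v $ i"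
    using arg_cong[OF eq, of "\<lambda>w. w $ i"] \<open>i < n\<close> \<open>v \<in> carrier_vec n\<close> by simp
  ultimately show ?thesis by simp
qed

lemma trace_eq_0_if_power_eq_scalar:
  fixes A :: "rat mat" and c :: rat
  assumes A: "A \<in> carrier_mat n n" and "t \<ge> 2" and At: "A ^\<^sub>m t = c \<cdot>\<^sub>m 1\<^sub>m n"
    and least: "\<And>g l. g \<noteq> 0 \<Longrightarrow> (l::complex) ^ t = of_rat c \<Longrightarrow> poly (map_poly of_rat g) l = 0 \<Longrightarrow> t \<le> degree g"
  shows "trace A = 0"
proof (cases "n = 0")
  case False
  have char_poly: "degree (char_poly A) = n" "coeff (char_poly A) n = 1"
    using degree_monic_char_poly[OF A] by auto
  have dvd: "t dvd j" if "coeff (char_poly A) j \<noteq> 0" for j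
  proof (rule dvd_index_of_coeff_if_roots_binomial[OF _ least _ _ that])
    show "0 < t" using \<open>t \<ge> 2\<close> by simp
    show "char_poly A \<noteq> 0" using char_poly by auto
    show "l ^ t = of_rat c" if "poly (map_poly of_rat (char_poly A)) l = 0" for l :: complex
      using char_poly_root_power_if_power_eq_scalar[OF A At that] .
  qed
  have "coeff (char_poly A) (n - 1) = 0"
  proof (rule ccontr)
    assume "coeff (char_poly A) (n - 1) \<noteq> 0"
    then have "t dvd n - (n - 1)"
      using dvd dvd_diff_nat char_poly(2) by simp
    then show False
      using \<open>t \<ge> 2\<close> False by simp
  qed
  then show ?thesis
    using coeff_char_poly_trace[OF A] False by simp
qed (use A in \<open>simp add: trace_def\<close>)

section \<open>The trace form of a finite-dimensional Q-algebra of reals\<close>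

interpretation Q: vector_space "\<lambda>(q::rat) (x::real). of_rat q * x"
  by unfold_locales (auto simp: algebra_simps of_rat_add of_rat_mult)

locale rat_algebra_basis =
  fixes B :: "real set"
  assumes finite_B: "finite B" and independent_B: "Q.independent B"
    and one_in_span: "1 \<in> Q.span B"
    and mult_in_span: "x \<in> Q.span B \<Longrightarrow> y \<in> Q.span B \<Longrightarrow> x * y \<in> Q.span B"
begin

definition basis_list :: "real list" where
  "basis_list = sorted_list_of_set B"

abbreviation d :: nat where
  "d \<equiv> card B"

definition mult_mat :: "real \<Rightarrow> rat mat" where
  "mult_mat w = mat d d (\<lambda>(i, j). Q.representation B (w * basis_list ! j) (basis_list ! i))"

definition trace_form :: "real \<Rightarrow> rat" where
  "trace_form w = trace (mult_mat w)"

lemma basis_list: "distinct basis_list" "set basis_list = B" "length basis_list = d"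
  using finite_B by (simp_all add: basis_list_def)

lemma basis_list_nth_in_B: "i < d \<Longrightarrow> basis_list ! i \<in> B"
  using basis_list nth_mem by metis

lemma basis_list_nth_in_span: "i < d \<Longrightarrow> basis_list ! i \<in> Q.span B"
  by (simp add: basis_list_nth_in_B Q.span_base)

lemma representation_basis_list:
  "i < d \<Longrightarrow> j < d \<Longrightarrow> Q.representation B (basis_list ! j) (basis_list ! i) = (if i = j then 1 else 0)"
  using finite_B Q.representation_basis[OF independent_B basis_list_nth_in_B, of j]
  by (simp add: basis_list_def nth_eq_iff_index_eq)

lemma sum_B_conv_basis_list: "(\<Sum>b\<in>B. f b) = (\<Sum>l<d. f (basis_list ! l))"
  using sum.distinct_set_conv_list[OF basis_list(1), of f] basis_list(2,3)
  by (simp add: sum_list_sum_nth atLeast0LessThan)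

lemma mult_mat_carrier: "mult_mat w \<in> carrier_mat d d"
  by (simp add: mult_mat_def)

lemma mult_mat_mult:
  assumes x: "x \<in> Q.span B" and y: "y \<in> Q.span B"
  shows "mult_mat (x * y) = mult_mat x * mult_mat y"
proof (rule eq_matI)
  fix i j assume "i < dim_row (mult_mat x * mult_mat y)" "j < dim_col (mult_mat x * mult_mat y)"
  then have i: "i < d" and j: "j < d" by (auto simp: mult_mat_def)
  let ?R = "Q.representation B"
  let ?b = "\<lambda>l. basis_list ! l"
  have yb: "y * ?b j \<in> Q.span B" using y j by (simp add: mult_in_span basis_list_nth_in_span)
  have xb: "of_rat c * (x * b) \<in> Q.span B" if "b \<in> B" for b c
    using x that by (simp add: mult_in_span Q.span_base Q.span_scale)
  have "x * y * ?b j = x * (\<Sum>b\<in>B. of_rat (?R (y * ?b j) b) * b)"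
    using Q.sum_representation_eq[OF independent_B yb finite_B subset_refl] by (simp add: mult.assoc)
  also have "\<dots> = (\<Sum>b\<in>B. of_rat (?R (y * ?b j) b) * (x * b))"
    by (simp add: sum_distrib_left mult.left_commute)
  finally have "?R (x * y * ?b j) = (\<lambda>b'. \<Sum>b\<in>B. ?R (of_rat (?R (y * ?b j) b) * (x * b)) b')"
    using Q.representation_sum[OF independent_B xb] by simp
  then have "?R (x * y * ?b j) (?b i) = (\<Sum>b\<in>B. ?R (of_rat (?R (y * ?b j) b) * (x * b)) (?b i))"
    by simp
  also have "\<dots> = (\<Sum>b\<in>B. ?R (y * ?b j) b * ?R (x * b) (?b i))"
    using x by (intro sum.cong refl) (simp add: Q.representation_scale[OF independent_B] mult_in_span Q.span_base)
  also have "\<dots> = (\<Sum>l<d. ?R (x * ?b l) (?b i) * ?R (y * ?b j) (?b l))"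
    by (simp add: sum_B_conv_basis_list mult.commute)
  finally show "mult_mat (x * y) $$ (i, j) = (mult_mat x * mult_mat y) $$ (i, j)"
    using i j by (simp add: mult_mat_def scalar_prod_def atLeast0LessThan)
qed (auto simp: mult_mat_def)

lemma mult_mat_of_rat: "mult_mat (of_rat c) = c \<cdot>\<^sub>m 1\<^sub>m d"
  by (rule eq_matI)
    (auto simp: mult_mat_def Q.representation_scale[OF independent_B basis_list_nth_in_span]
       representation_basis_list)

lemma mult_mat_power: "x \<in> Q.span B \<Longrightarrow> mult_mat (x ^ m) = mult_mat x ^\<^sub>m m"
proof (induction m)
  case 0
  have "1 \<cdot>\<^sub>m 1\<^sub>m d = (1\<^sub>m d :: rat mat)" by (rule eq_matI) auto
  then show ?case using mult_mat_of_rat[of 1] by (simp add: mult_mat_def)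
next
  case (Suc m)
  have "x ^ m \<in> Q.span B"
    using Suc.prems by (induction m) (auto simp: one_in_span mult_in_span)
  have "mult_mat (x ^ Suc m) = mult_mat (x ^ m * x)"
    by (simp only: power_Suc2)
  also have "\<dots> = mult_mat x ^\<^sub>m Suc m"
    using Suc \<open>x ^ m \<in> Q.span B\<close> by (simp add: mult_mat_mult)
  finally show ?case .
qed

lemma trace_form_lincomb:
  assumes "\<And>i. i \<in> I \<Longrightarrow> x i \<in> Q.span B"
  shows "trace_form (\<Sum>i\<in>I. of_rat (q i) * x i) = (\<Sum>i\<in>I. q i * trace_form (x i))"
proof -
  have "Q.representation B ((\<Sum>i\<in>I. of_rat (q i) * x i) * w) = (\<lambda>b. \<Sum>i\<in>I. q i * Q.representation B (x i * w) b)"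
    if "w \<in> Q.span B" for w
    using assms that
    by (simp add: sum_distrib_right mult.assoc Q.representation_sum[OF independent_B] Q.representation_scale[OF independent_B]
        Q.span_scale mult_in_span)
  then show ?thesis
    by (simp add: trace_form_def trace_def mult_mat_def basis_list_nth_in_span sum_distrib_left sum.swap[of _ I])
qed

lemma trace_form_one: "trace_form 1 \<noteq> 0"
proof -
  have "B \<noteq> {}" using one_in_span by auto
  then have "d > 0" using finite_B by auto
  then show ?thesis
    using mult_mat_of_rat[of 1] by (simp add: trace_form_def trace_def)
qed

lemma trace_form_radical:
  assumes z: "z \<in> Q.span B" "z > 0" "m > 0" "z ^ m \<in> \<rat>" "z \<notin> \<rat>"
  shows "trace_form z = 0"
proof -
  define t where "t = (LEAST t. 0 < t \<and> z ^ t \<in> \<rat>)"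
  have t: "0 < t" "z ^ t \<in> \<rat>"
    using LeastI[of "\<lambda>t. 0 < t \<and> z ^ t \<in> \<rat>" m] z by (simp_all add: t_def)
  have t_least: "z ^ s \<notin> \<rat>" if "0 < s" "s < t" for s
    using not_less_Least[of s "\<lambda>t. 0 < t \<and> z ^ t \<in> \<rat>"] that by (simp add: t_def)
  have "t \<noteq> 1" using t z(5) by auto
  obtain c where c: "z ^ t = of_rat c" using t(2) by (auto elim: Rats_cases)
  show ?thesis
    unfolding trace_form_def
  proof (rule trace_eq_0_if_power_eq_scalar[OF mult_mat_carrier])
    show "2 \<le> t" using t(1) \<open>t \<noteq> 1\<close> by simp
    show "mult_mat z ^\<^sub>m t = c \<cdot>\<^sub>m 1\<^sub>m d"
      using mult_mat_power[OF z(1)] c mult_mat_of_rat by metis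
    show "t \<le> degree g" if "g \<noteq> 0" "l ^ t = of_rat c" "poly (map_poly of_rat g) l = 0" for g and l :: complex
      using least_degree_binomial_root[OF z(2) c that(2) t_least that(1,3)] .
  qed
qed

end

section \<open>Linear independence of radicals\<close>

lemma span_mult_closed:
  assumes S_mult: "\<And>s s'. s \<in> S \<Longrightarrow> s' \<in> S \<Longrightarrow> s * s' \<in> Q.span S"
    and "u \<in> Q.span S" and "v \<in> Q.span S"
  shows "u * v \<in> Q.span S"
proof -
  have S_mult_span: "s * v \<in> Q.span S" if s: "s \<in> S" for s
    using \<open>v \<in> Q.span S\<close>
  proof (induction rule: Q.span_induct_alt)
    case (step c s' w)
    have "s * (of_rat c * s' + w) = of_rat c * (s * s') + s * w" by (simp add: algebra_simps)
    then show ?case using step S_mult[OF s step(1)] by (simp add: Q.span_add Q.span_scale)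
  qed (simp add: Q.span_zero)
  from \<open>u \<in> Q.span S\<close> show ?thesis
  proof (induction rule: Q.span_induct_alt)
    case (step c s w)
    have "(of_rat c * s + w) * v = of_rat c * (s * v) + w * v" by (simp add: algebra_simps)
    then show ?case using step S_mult_span by (simp add: Q.span_add Q.span_scale)
  qed (simp add: Q.span_zero)
qed

definition radical_monomials :: "'i set \<Rightarrow> ('i \<Rightarrow> real) \<Rightarrow> nat \<Rightarrow> real set" where
  "radical_monomials I x k = (\<lambda>a. \<Prod>i\<in>I. x i ^ a i) ` (I \<rightarrow>\<^sub>E {..<k})"

lemma finite_radical_monomials: "finite I \<Longrightarrow> finite (radical_monomials I x k)"
  by (simp add: radical_monomials_def finite_PiE)

lemma prod_power_in_span_radical_monomials:
  assumes "k > 0" and pow: "\<And>i. i \<in> I \<Longrightarrow> x i ^ k \<in> \<rat>"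
  shows "(\<Prod>i\<in>I. x i ^ a i) \<in> Q.span (radical_monomials I x k)"
proof -
  have "\<exists>c. x i ^ a i = of_rat c * x i ^ (a i mod k)" if i: "i \<in> I" for i
  proof -
    obtain c where "x i ^ k = of_rat c" using pow[OF i] by (auto elim: Rats_cases)
    then have "x i ^ a i = of_rat (c ^ (a i div k)) * x i ^ (a i mod k)"
      by (metis div_mult_mod_eq power_add power_mult of_rat_power mult.commute)
    then show ?thesis ..
  qed
  then obtain c where c: "\<And>i. i \<in> I \<Longrightarrow> x i ^ a i = of_rat (c i) * x i ^ (a i mod k)"
    by metis
  let ?a = "restrict (\<lambda>i. a i mod k) I"
  have "(\<Prod>i\<in>I. x i ^ a i) = of_rat (\<Prod>i\<in>I. c i) * (\<Prod>i\<in>I. x i ^ ?a i)"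
    by (simp add: c prod.distrib of_rat_prod cong: prod.cong)
  moreover have "(\<Prod>i\<in>I. x i ^ ?a i) \<in> radical_monomials I x k"
    unfolding radical_monomials_def using \<open>k > 0\<close> by (intro imageI) auto
  ultimately show ?thesis
    by (simp add: Q.span_scale Q.span_base)
qed

lemma span_radical_monomials_mult:
  assumes "k > 0" and "\<And>i. i \<in> I \<Longrightarrow> x i ^ k \<in> \<rat>"
    and "u \<in> Q.span (radical_monomials I x k)" "v \<in> Q.span (radical_monomials I x k)"
  shows "u * v \<in> Q.span (radical_monomials I x k)"
proof (rule span_mult_closed[OF _ assms(3,4)])
  fix s s' assume "s \<in> radical_monomials I x k" "s' \<in> radical_monomials I x k"
  then obtain a a' where "s = (\<Prod>i\<in>I. x i ^ a i)" "s' = (\<Prod>i\<in>I. x i ^ a' i)"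
    by (auto simp: radical_monomials_def)
  then have "s * s' = (\<Prod>i\<in>I. x i ^ (a i + a' i))"
    by (simp add: power_add prod.distrib)
  then show "s * s' \<in> Q.span (radical_monomials I x k)"
    using prod_power_in_span_radical_monomials[where I = I and x = x, OF assms(1,2)] by simp
qed

lemma power_in_span_radical_monomials:
  assumes "k > 0" and "\<And>i. i \<in> I \<Longrightarrow> x i ^ k \<in> \<rat>" and "finite I" "j \<in> I"
  shows "x j ^ m \<in> Q.span (radical_monomials I x k)"
  using prod_power_in_span_radical_monomials[where I = I and x = x and a = "\<lambda>i. if i = j then m else 0", OF assms(1,2)]
    assms(3,4)
  by (simp add: if_distrib[of "\<lambda>e. _ ^ e"] prod.delta cong: if_cong)

lemma inverse_in_span_radical_monomials:
  assumes "k > 0" and pow: "\<And>i. i \<in> I \<Longrightarrow> x i ^ k \<in> \<rat>" and "finite I" "j \<in> I" "x j \<noteq> 0"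
  shows "inverse (x j) \<in> Q.span (radical_monomials I x k)"
proof -
  obtain c where c: "x j ^ k = of_rat c" using pow[OF \<open>j \<in> I\<close>] by (auto elim: Rats_cases)
  have xc: "x j ^ (k - 1) * x j = of_rat c"
    using power_minus_mult[OF \<open>k > 0\<close>, of "x j"] c by simp
  then have "inverse (x j) = of_rat (inverse c) * x j ^ (k - 1)"
    using \<open>x j \<noteq> 0\<close> by (simp flip: xc add: of_rat_inverse)
  then show ?thesis
    using power_in_span_radical_monomials[where I = I and x = x, OF assms(1-4)] by (simp add: Q.span_scale)
qed

lemma radical_monomials_basis:
  assumes "finite I" "k > 0" "\<And>i. i \<in> I \<Longrightarrow> x i ^ k \<in> \<rat>"
  obtains B where "rat_algebra_basis B" "Q.span B = Q.span (radical_monomials I x k)"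
proof -
  let ?S = "radical_monomials I x k"
  obtain B where B: "B \<subseteq> Q.span ?S" "Q.independent B" "Q.span ?S \<subseteq> Q.span B"
    using Q.maximal_independent_subset by blast
  have "finite B"
    using Q.independent_span_bound[OF finite_radical_monomials[OF \<open>finite I\<close>] B(2,1)] ..
  have span_B: "Q.span B = Q.span ?S"
    using Q.span_mono[OF B(1)] B(3) by (simp add: Q.span_span)
  have "rat_algebra_basis B"
  proof
    show "1 \<in> Q.span B"
      using prod_power_in_span_radical_monomials[where I = I and x = x and a = "\<lambda>_. 0", OF assms(2,3)] span_B
      by simp
    show "u * v \<in> Q.span B" if "u \<in> Q.span B" "v \<in> Q.span B" for u v
      using span_radical_monomials_mult[where I = I and x = x, OF assms(2,3)] that span_B by simp
  qed (use \<open>finite B\<close> B(2) in auto)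
  with span_B show ?thesis using that by blast
qed

theorem radicals_rat_independent:
  fixes x :: "'i \<Rightarrow> real" and q :: "'i \<Rightarrow> rat"
  assumes "finite I" and "k > 0"
    and pos: "\<And>i. i \<in> I \<Longrightarrow> x i > 0" and pow: "\<And>i. i \<in> I \<Longrightarrow> x i ^ k \<in> \<rat>"
    and ratio: "\<And>i j. i \<in> I \<Longrightarrow> j \<in> I \<Longrightarrow> x i / x j \<in> \<rat> \<Longrightarrow> i = j"
    and rel: "(\<Sum>i\<in>I. of_rat (q i) * x i) = 0" and "j \<in> I"
  shows "q j = 0"
proof -
  obtain B where "rat_algebra_basis B" and span_B: "Q.span B = Q.span (radical_monomials I x k)"
    using radical_monomials_basis[where I = I and x = x, OF \<open>finite I\<close> \<open>k > 0\<close> pow] .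
  interpret rat_algebra_basis B by fact
  have quotient: "x i / x j \<in> Q.span B" if "i \<in> I" for i
    using mult_in_span span_B pos[OF \<open>j \<in> I\<close>]
      power_in_span_radical_monomials[where I = I and x = x and m = 1, OF \<open>k > 0\<close> pow \<open>finite I\<close> that]
      inverse_in_span_radical_monomials[where I = I and x = x, OF \<open>k > 0\<close> pow \<open>finite I\<close> \<open>j \<in> I\<close>]
    by (simp add: divide_inverse)
  have trace_quotient: "trace_form (x i / x j) = (if i = j then trace_form 1 else 0)" if "i \<in> I" for i
  proof (cases "i = j")
    case False
    have "x i / x j > 0" using pos[OF that] pos[OF \<open>j \<in> I\<close>] by simp
    moreover have "(x i / x j) ^ k \<in> \<rat>"
      using pow[OF that] pow[OF \<open>j \<in> I\<close>] by (simp add: power_divide)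
    moreover have "x i / x j \<notin> \<rat>"
      using ratio[OF that \<open>j \<in> I\<close>] False by blast
    ultimately show ?thesis
      using trace_form_radical[OF quotient[OF that] _ \<open>k > 0\<close>] False by simp
  qed (use pos[OF \<open>j \<in> I\<close>] in simp)
  have "q j * trace_form 1 = (\<Sum>i\<in>I. if i = j then q i * trace_form 1 else 0)"
    using \<open>finite I\<close> \<open>j \<in> I\<close> by simp
  also have "\<dots> = (\<Sum>i\<in>I. q i * trace_form (x i / x j))"
    by (intro sum.cong) (simp_all add: trace_quotient)
  also have "\<dots> = trace_form (\<Sum>i\<in>I. of_rat (q i) * (x i / x j))"
    using quotient by (rule trace_form_lincomb [symmetric])
  also have "(\<Sum>i\<in>I. of_rat (q i) * (x i / x j)) = 0"
    using rel by (simp flip: sum_divide_distrib)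
  also have "trace_form 0 = 0"
    using trace_form_lincomb[of "{}"] by simp
  finally show "q j = 0"
    using trace_form_one by simp
qed

section \<open>The set Lambda_k\<close>

definition gap_exponents :: "nat \<Rightarrow> nat \<Rightarrow> bool" where
  "gap_exponents k N \<longleftrightarrow> N > 0 \<and>
     (\<forall>p. prime p \<longrightarrow> multiplicity p N = 0 \<or> k < multiplicity p N \<and> multiplicity p N < 2 * k)"

lemma gap_exponents_1: "gap_exponents k 1"
  by (simp add: gap_exponents_def)

lemma eq_if_mod_eq_in_gap:
  fixes v w k :: nat
  assumes "v = 0 \<or> k < v \<and> v < 2 * k" "w = 0 \<or> k < w \<and> w < 2 * k" "v mod k = w mod k"
  shows "v = w"
proof -
  have mod_gap: "u mod k = u - k" if "k < u" "u < 2 * k" for u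
  proof -
    have "u mod k = (u - k) mod k" using that(1) by (intro le_mod_geq) simp
    also have "\<dots> = u - k" using that(2) by (intro mod_less) simp
    finally show ?thesis .
  qed
  show ?thesis
    using assms mod_gap[of v] mod_gap[of w] by (cases "v = 0"; cases "w = 0") auto
qed

lemma gap_exponents_eq_if_eq_mult_powers:
  fixes N N' a b :: nat
  assumes "k > 0" "gap_exponents k N" "gap_exponents k N'" "a > 0" "b > 0"
    and eq: "N * b ^ k = a ^ k * N'"
  shows "N = N'"
proof -
  have "N > 0" "N' > 0" using assms(2,3) by (auto simp: gap_exponents_def)
  have "multiplicity p N = multiplicity p N'" if p: "prime p" for p
  proof -
    let ?v = "multiplicity p N" and ?v' = "multiplicity p N'"
    have val: "?v + k * multiplicity p b = k * multiplicity p a + ?v'"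
      using arg_cong[OF eq, of "multiplicity p"] p \<open>N > 0\<close> \<open>N' > 0\<close> \<open>a > 0\<close> \<open>b > 0\<close>
      by (simp add: prime_elem_multiplicity_mult_distrib prime_elem_multiplicity_power_distrib)
    have "?v mod k = (?v + k * multiplicity p b) mod k" by simp
    also have "\<dots> = (k * multiplicity p a + ?v') mod k" by (simp only: val)
    also have "\<dots> = ?v' mod k" by simp
    finally have "?v mod k = ?v' mod k" .
    moreover have "?v = 0 \<or> k < ?v \<and> ?v < 2 * k" "?v' = 0 \<or> k < ?v' \<and> ?v' < 2 * k"
      using assms(2,3) p by (auto simp: gap_exponents_def)
    ultimately show ?thesis by (blast intro: eq_if_mod_eq_in_gap)
  qed
  then show ?thesis
    using \<open>N > 0\<close> \<open>N' > 0\<close> by (rule multiplicity_eq_nat[rotated 2])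
qed

definition gap_roots :: "nat \<Rightarrow> real set" where
  "gap_roots k = {root k (real N) | N. gap_exponents k N}"

lemma one_in_gap_roots: "k > 0 \<Longrightarrow> 1 \<in> gap_roots k"
  using gap_exponents_1 by (force simp: gap_roots_def)

lemma gap_roots_pos: "k > 0 \<Longrightarrow> u \<in> gap_roots k \<Longrightarrow> u > 0"
  by (auto simp: gap_roots_def gap_exponents_def)

lemma gap_roots_power_in_Nats: "k > 0 \<Longrightarrow> u \<in> gap_roots k \<Longrightarrow> u ^ k \<in> \<nat>"
  by (auto simp: gap_roots_def gap_exponents_def)

lemma gap_roots_eq_if_ratio_in_Rats:
  assumes "k > 0" "u \<in> gap_roots k" "v \<in> gap_roots k" and "u / v \<in> \<rat>"
  shows "u = v"
proof -
  obtain N N' where N: "gap_exponents k N" "u = root k (real N)"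
    and N': "gap_exponents k N'" "v = root k (real N')"
    using assms(2,3) by (auto simp: gap_roots_def)
  have pos: "u > 0" "v > 0" using assms(1-3) by (simp_all add: gap_roots_pos)
  obtain a b :: int where "b > 0" and ab: "u / v = of_int a / of_int b"
    using assms(4) by (auto elim: Rats_cases')
  moreover have "u / v > 0" using pos by simp
  ultimately have "a > 0" by (simp add: zero_less_divide_iff)
  have "u * of_int b = of_int a * v"
    using ab pos \<open>b > 0\<close> by (simp add: field_simps)
  then have "(u * of_int b) ^ k = (of_int a * v) ^ k" by simp
  then have "real (N * nat b ^ k) = real (nat a ^ k * N')"
    using \<open>k > 0\<close> \<open>a > 0\<close> \<open>b > 0\<close> N N' by (simp add: power_mult_distrib real_root_pow_pos2)
  then have "N * nat b ^ k = nat a ^ k * N'"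
    by (simp only: of_nat_eq_iff)
  then have "N = N'"
    using \<open>a > 0\<close> \<open>b > 0\<close> by (intro gap_exponents_eq_if_eq_mult_powers[OF assms(1) N(1) N'(1)]) auto
  then show ?thesis using N N' by simp
qed

lemma inverse_gap_roots_rat_independent:
  assumes "finite I" "k > 0" "inj_on \<mu> I" "\<mu> ` I \<subseteq> gap_roots k"
    and "(\<Sum>i\<in>I. of_rat (q i) * inverse (\<mu> i)) = 0" "j \<in> I"
  shows "q j = 0"
proof (rule radicals_rat_independent[where x = "\<lambda>i. inverse (\<mu> i)", OF assms(1,2) _ _ _ assms(5,6)])
  show "inverse (\<mu> i) > 0" if "i \<in> I" for i
    using gap_roots_pos[OF \<open>k > 0\<close>] assms(4) that by auto
  show "inverse (\<mu> i) ^ k \<in> \<rat>" if "i \<in> I" for i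
    using gap_roots_power_in_Nats[OF \<open>k > 0\<close>] assms(4) that
    by (auto simp: power_inverse intro: Rats_inverse Nats_subset_Rats [THEN subsetD])
  show "i = i'" if "i \<in> I" "i' \<in> I" "inverse (\<mu> i) / inverse (\<mu> i') \<in> \<rat>" for i i'
  proof -
    have "\<mu> i' = \<mu> i"
      using gap_roots_eq_if_ratio_in_Rats[OF \<open>k > 0\<close>, of "\<mu> i'" "\<mu> i"] assms(4) that
      by (auto simp: divide_inverse mult.commute)
    then show ?thesis using \<open>inj_on \<mu> I\<close> that(1,2) by (auto dest: inj_onD)
  qed
qed

lemma multiplicity_prod_powers_squarefree:
  fixes b e :: "'i \<Rightarrow> nat"
  assumes "finite I" "squarefree (\<Prod>i\<in>I. b i)" "\<And>i. i \<in> I \<Longrightarrow> b i \<noteq> 0" "prime p"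
  shows "multiplicity p (\<Prod>i\<in>I. b i ^ e i) = 0 \<or> (\<exists>i\<in>I. multiplicity p (\<Prod>i\<in>I. b i ^ e i) = e i)"
proof -
  have "0 \<notin> (\<lambda>i. b i ^ e i) ` I" "0 \<notin> b ` I"
    by (simp_all add: image_iff assms(3))
  then have "multiplicity p (\<Prod>i\<in>I. b i ^ e i) = (\<Sum>i\<in>I. multiplicity p (b i ^ e i))"
    using assms(1,4) by (intro prime_elem_multiplicity_prod_distrib) auto
  also have "\<dots> = (\<Sum>i\<in>I. e i * multiplicity p (b i))"
    using assms(3,4) by (intro sum.cong) (simp_all add: prime_elem_multiplicity_power_distrib)
  finally have mult_prod: "multiplicity p (\<Prod>i\<in>I. b i ^ e i) = (\<Sum>i\<in>I. e i * multiplicity p (b i))" .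
  have "(\<Prod>i\<in>I. b i) \<noteq> 0" using assms(1,3) by simp
  then have "multiplicity p (\<Prod>i\<in>I. b i) \<le> 1"
    using assms(2,4) squarefree_factorial_semiring'' by blast
  moreover have "multiplicity p (\<Prod>i\<in>I. b i) = (\<Sum>i\<in>I. multiplicity p (b i))"
    using assms(1,4) \<open>0 \<notin> b ` I\<close> by (intro prime_elem_multiplicity_prod_distrib) auto
  ultimately have "(\<Sum>i\<in>I. multiplicity p (b i)) \<le> 1" by simp
  show ?thesis
  proof (cases "\<forall>i\<in>I. multiplicity p (b i) = 0")
    case True
    then show ?thesis by (simp add: mult_prod)
  next
    case False
    then obtain i0 where i0: "i0 \<in> I" "multiplicity p (b i0) \<noteq> 0" by blast
    let ?rest = "\<lambda>f. (\<Sum>i\<in>I - {i0}. f i * multiplicity p (b i))"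
    have "(\<Sum>i\<in>I. multiplicity p (b i)) = multiplicity p (b i0) + ?rest (\<lambda>_. 1)"
      using assms(1) i0(1) by (simp add: sum.remove)
    then have "multiplicity p (b i0) = 1" "?rest (\<lambda>_. 1) = 0"
      using \<open>(\<Sum>i\<in>I. _) \<le> 1\<close> i0(2) by linarith+
    then have "?rest e = 0"
      using assms(1) by simp
    moreover have "multiplicity p (\<Prod>i\<in>I. b i ^ e i) = e i0 * multiplicity p (b i0) + ?rest e"
      using mult_prod assms(1) i0(1) by (simp add: sum.remove)
    ultimately show ?thesis
      using i0(1) \<open>multiplicity p (b i0) = 1\<close> by auto
  qed
qed

lemma Lambda_in_gap_roots:
  assumes "k \<ge> 2" and "l \<in> Lambda k"
  shows "l \<in> gap_roots k" and "l \<noteq> 1"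
proof -
  obtain b :: "nat \<Rightarrow> nat" where l: "l = root k (\<Prod>i\<in>{1..k-1}. real (b i) ^ (k + i))"
    and b1: "\<forall>i\<in>{1..k-1}. b i \<ge> 1" and b2: "(\<Prod>i\<in>{1..k-1}. b i) \<ge> 2"
    and sf: "squarefree (\<Prod>i\<in>{1..k-1}. b i)"
    using assms(2) unfolding Lambda_def by blast
  define N where "N = (\<Prod>i\<in>{1..k-1}. b i ^ (k + i))"
  have "(\<Prod>i\<in>{1..k-1}. b i) \<le> N"
    unfolding N_def using b1 by (intro prod_mono) (auto simp: self_le_power)
  then have "N \<ge> 2" using b2 by simp
  moreover have "gap_exponents k N"
    unfolding gap_exponents_def
  proof (intro conjI allI impI)
    show "N > 0" using \<open>N \<ge> 2\<close> by simp
    fix p :: nat assume "prime p"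
    have "b i \<noteq> 0" if "i \<in> {1..k-1}" for i using b1 that by fastforce
    then have "multiplicity p N = 0 \<or> (\<exists>i\<in>{1..k-1}. multiplicity p N = k + i)"
      unfolding N_def using multiplicity_prod_powers_squarefree[OF _ sf _ \<open>prime p\<close>] by blast
    then show "multiplicity p N = 0 \<or> k < multiplicity p N \<and> multiplicity p N < 2 * k"
      by auto
  qed
  moreover have "l = root k (real N)"
    using l by (simp add: N_def)
  ultimately show "l \<in> gap_roots k" and "l \<noteq> 1"
    using \<open>k \<ge> 2\<close> by (auto simp: gap_roots_def)
qed

theorem mainTheorem5:
  fixes k n :: nat and lam :: "nat \<Rightarrow> real"
  assumes "k \<ge> 2"
    and "\<forall>i\<in>{1..n}. lam i \<in> Lambda k"
    and "inj_on lam {1..n}"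
  shows "\<forall>q :: nat \<Rightarrow> rat.
           of_rat (q 0) + (\<Sum>i=1..n. of_rat (q i) * inverse (lam i)) = (0::real)
           \<longrightarrow> (\<forall>i\<in>{0..n}. q i = 0)"
proof (intro allI impI ballI)
  fix q :: "nat \<Rightarrow> rat" and j
  assume rel: "of_rat (q 0) + (\<Sum>i=1..n. of_rat (q i) * inverse (lam i)) = (0::real)"
    and "j \<in> {0..n}"
  define \<mu> where "\<mu> i = (if i = 0 then 1 else lam i)" for i
  have lam: "lam i \<in> gap_roots k" "lam i \<noteq> 1" if "i \<in> {1..n}" for i
    using Lambda_in_gap_roots[OF \<open>k \<ge> 2\<close>] assms(2) that by blast+
  have "\<mu> ` {0..n} \<subseteq> gap_roots k"
    using lam(1) one_in_gap_roots[of k] \<open>k \<ge> 2\<close> by (auto simp: \<mu>_def)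
  moreover have "inj_on \<mu> {0..n}"
  proof (rule inj_onI)
    fix i i' assume "i \<in> {0..n}" "i' \<in> {0..n}" "\<mu> i = \<mu> i'"
    then show "i = i'"
      using lam(2) inj_onD[OF assms(3)] by (cases "i = 0"; cases "i' = 0") (auto simp: \<mu>_def)
  qed
  moreover have "(\<Sum>i\<in>{0..n}. of_rat (q i) * inverse (\<mu> i)) = 0"
  proof -
    have "(\<Sum>i=1..n. of_rat (q i) * inverse (\<mu> i)) = (\<Sum>i=1..n. of_rat (q i) * inverse (lam i))"
      by (intro sum.cong) (auto simp: \<mu>_def)
    then show ?thesis
      using rel by (simp add: sum.atLeast_Suc_atMost \<mu>_def)
  qed
  ultimately show "q j = 0"
    using \<open>k \<ge> 2\<close> \<open>j \<in> {0..n}\<close> by (intro inverse_gap_roots_rat_independent[of "{0..n}" k \<mu> q j]) auto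
qed

end
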